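(* Let $S$ be a subspace of $W_0$ of finite codimension, and let $i_0>0$ be an integer. Let $M_{i_0,S}$ be the Lie subalgebra of $W$ generated by $t^{i_0}D$, $t^{i_0+1}D$, $t^{i_0}D^2$ and $S$. Then there is an integer $K>0$ with $W_{[K,\infty)}\subset M_{i_0,S}$.
   Context: Let $\mathbb{F}$ be an algebraically closed field of characteristic zero, and let $W=\mathcal{W}(\mathbb{Z},1)^{(1)}=\mathrm{span}\{t^iD^j\mid i\in\mathbb{Z},\,j\ge1\}$. Its Lie bracket is $$[t^iDf(D),t^jDg(D)]=t^{i+j}D\big((D+j)f(D+j)g(D)-(D+i)g(D+i)f(D)\big)$$ for $f,g\in\mathbb{F}[D]$. The algebra is $\mathbb{Z}$-graded by $W_i=\{t^iDf(D)\mid f\in\mathbb{F}[D]\}$. We write $W_{[K,\infty)}=\bigoplus_{k\ge K}W_k$. *)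

theory Defs
  imports "HOL-Computational_Algebra.Polynomial"
begin

text \<open>An element of W = span{t^i D^j | j >= 1} is written uniquely as a finite sum
  of t^i D f_i(D) with f_i in F[D]; we represent it by the function i |-> f_i
  (an int-indexed family of polynomials in D with finite support).\<close>

definition Wset :: "(int \<Rightarrow> 'a::field poly) set" where
  "Wset = {x. finite {i. x i \<noteq> 0}}"

text \<open>[t^i D f(D), t^j D g(D)] = t^(i+j) D ((D+j) f(D+j) g(D) - (D+i) g(D+i) f(D)).\<close>
definition br_hom :: "int \<Rightarrow> 'a::field_char_0 poly \<Rightarrow> int \<Rightarrow> 'a poly \<Rightarrow> 'a poly" where
  "br_hom i f j g =
     [:of_int j, 1:] * pcompose f [:of_int j, 1:] * g
   - [:of_int i, 1:] * pcompose g [:of_int i, 1:] * f"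

definition Wbracket :: "(int \<Rightarrow> 'a::field_char_0 poly) \<Rightarrow> (int \<Rightarrow> 'a poly) \<Rightarrow> (int \<Rightarrow> 'a poly)" where
  "Wbracket x y = (\<lambda>k. \<Sum>i | x i \<noteq> 0. br_hom i (x i) (k - i) (y (k - i)))"

definition Whom :: "int \<Rightarrow> 'a::zero \<Rightarrow> (int \<Rightarrow> 'a)" where
  "Whom i f = (\<lambda>k. if k = i then f else 0)"

inductive_set Lie_gen :: "(int \<Rightarrow> 'a::field_char_0 poly) set \<Rightarrow> (int \<Rightarrow> 'a poly) set"
  for G where
  gen: "x \<in> G \<Longrightarrow> x \<in> Lie_gen G"
| zero: "(\<lambda>k. 0) \<in> Lie_gen G"
| add: "x \<in> Lie_gen G \<Longrightarrow> y \<in> Lie_gen G \<Longrightarrow> (\<lambda>k. x k + y k) \<in> Lie_gen G"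
| smul: "x \<in> Lie_gen G \<Longrightarrow> (\<lambda>k. smult c (x k)) \<in> Lie_gen G"
| brk: "x \<in> Lie_gen G \<Longrightarrow> y \<in> Lie_gen G \<Longrightarrow> Wbracket x y \<in> Lie_gen G"

text \<open>Subspaces of W_0 = {D f(D)}, identified with F[D] via D f(D) |-> f.\<close>
definition poly_subspace :: "'a::field poly set \<Rightarrow> bool" where
  "poly_subspace S \<longleftrightarrow> 0 \<in> S \<and> (\<forall>p\<in>S. \<forall>q\<in>S. p + q \<in> S) \<and> (\<forall>c. \<forall>p\<in>S. smult c p \<in> S)"

definition finite_codim :: "'a::field poly set \<Rightarrow> bool" where
  "finite_codim S \<longleftrightarrow> (\<exists>B. finite B \<and>
      (\<forall>p. \<exists>s\<in>S. \<exists>c. p = s + (\<Sum>b\<in>B. smult (c b) b)))"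

end

theory Submission
  imports Defs
begin

text \<open>
  Everything rests on the leading term of a bracket: if deg f \<le> a and deg g \<le> b, then
  [t^i D f(D), t^j D g(D)] = t^(i+j) D h(D) with deg h \<le> a + b and
  coeff h (a + b) = ((a+1) j - (b+1) i) coeff f a coeff g b.
  Hence if W_i and W_j contain elements of M_(i0,S) of exact degrees m and n, so does W_(i+j)
  of degree m + n, unless (m+1) j = (n+1) i. With m = n = 0 this brackets t^i0 D and
  t^(i0+1) D into t^k D for every k \<ge> (i0+1)^2 (i0 and i0+1 generate all large integers);
  bracketing with t^i0 D^2 then raises the degree by one at the cost of a shift by i0, and
  bracketing t^k D with elements of S, which has elements of every large degree, supplies the
  remaining degrees. A subspace of F[D] with elements of every degree is all of F[D].
\<close>

lemma coeff_mult_degree_le_sum: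
  fixes p q :: "'a::comm_semiring_0 poly"
  assumes "degree p \<le> m" and "degree q \<le> n"
  shows "coeff (p * q) (m + n) = coeff p m * coeff q n"
proof (cases "degree p = m \<and> degree q = n")
  case True
  then show ?thesis using coeff_mult_degree_sum[of p q] by simp
next
  case False
  then have "degree (p * q) < m + n" using assms degree_mult_le[of p q] by linarith
  moreover have "coeff p m = 0 \<or> coeff q n = 0" using False assms by (auto intro: coeff_eq_0)
  ultimately show ?thesis by (auto simp: coeff_eq_0)
qed

lemma coeff_pcompose_shift_degree:
  fixes p :: "'a::idom poly"
  assumes "degree p \<le> n"
  shows "coeff (p \<circ>\<^sub>p [:c, 1:]) n = coeff p n"
proof (cases "degree p = n")
  case True
  then show ?thesis using lead_coeff_comp[of "[:c, 1:]" p] by (simp add: degree_pcompose)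
next
  case False
  then show ?thesis using assms by (simp add: coeff_eq_0 degree_pcompose)
qed

lemma pcompose_shift_diff:
  fixes h :: "'a::idom poly"
  assumes "degree h \<le> Suc n"
  shows "degree (h \<circ>\<^sub>p [:c, 1:] - h) \<le> n"
    and "coeff (h \<circ>\<^sub>p [:c, 1:] - h) n = of_nat (Suc n) * c * coeff h (Suc n)"
proof -
  have "degree (h \<circ>\<^sub>p [:c, 1:] - h) \<le> n \<and>
        coeff (h \<circ>\<^sub>p [:c, 1:] - h) n = of_nat (Suc n) * c * coeff h (Suc n)"
    using assms
  proof (induction h arbitrary: n rule: pCons_induct)
    case 0
    then show ?case by simp
  next
    case (pCons a p)
    have dp: "degree p \<le> n"
      using pCons.prems by (cases "p = 0") auto
    have split: "pCons a p \<circ>\<^sub>p [:c, 1:] - pCons a p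
               = pCons 0 (p \<circ>\<^sub>p [:c, 1:] - p) + smult c (p \<circ>\<^sub>p [:c, 1:])"
      by (simp add: pcompose_pCons algebra_simps)
    show ?case
    proof (cases n)
      case 0
      with dp obtain b where "p = [:b:]" by (metis degree_eq_zeroE le_zero_eq)
      then show ?thesis using 0 unfolding split by simp
    next
      case (Suc m)
      with pCons.IH dp have IH: "degree (p \<circ>\<^sub>p [:c, 1:] - p) \<le> m"
        "coeff (p \<circ>\<^sub>p [:c, 1:] - p) m = of_nat (Suc m) * c * coeff p (Suc m)"
        by auto
      have "degree (pCons 0 (p \<circ>\<^sub>p [:c, 1:] - p)) \<le> n"
        using IH(1) Suc degree_pCons_le[of 0 "p \<circ>\<^sub>p [:c, 1:] - p"] by linarith
      moreover have "degree (smult c (p \<circ>\<^sub>p [:c, 1:])) \<le> n"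
        using dp by (simp add: degree_pcompose le_trans[OF degree_smult_le])
      ultimately have "degree (pCons a p \<circ>\<^sub>p [:c, 1:] - pCons a p) \<le> n"
        unfolding split by (rule degree_add_le)
      moreover have "coeff (p \<circ>\<^sub>p [:c, 1:]) m = of_nat (Suc m) * c * coeff p (Suc m) + coeff p m"
        using IH(2) unfolding coeff_diff by (simp add: diff_eq_eq)
      then have "coeff (pCons a p \<circ>\<^sub>p [:c, 1:] - pCons a p) n
                 = of_nat (Suc n) * c * coeff (pCons a p) (Suc n)"
        using Suc dp by (simp add: split coeff_pcompose_shift_degree algebra_simps)
      ultimately show ?thesis by blast
    qed
  qed
  then show "degree (h \<circ>\<^sub>p [:c, 1:] - h) \<le> n"
    and "coeff (h \<circ>\<^sub>p [:c, 1:] - h) n = of_nat (Suc n) * c * coeff h (Suc n)" by auto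
qed

text \<open>Since (D+j) f(D+j) is D f(D) shifted by j, the two products D f g cancel.\<close>

lemma br_hom_eq_shift_diffs:
  "br_hom i f j g = (pCons 0 f \<circ>\<^sub>p [:of_int j, 1:] - pCons 0 f) * g
                  - (pCons 0 g \<circ>\<^sub>p [:of_int i, 1:] - pCons 0 g) * f"
  by (simp add: br_hom_def pcompose_pCons algebra_simps)

lemma
  fixes f g :: "'a::field_char_0 poly"
  assumes "degree f \<le> a" and "degree g \<le> b"
  shows degree_br_hom_le: "degree (br_hom i f j g) \<le> a + b"
    and coeff_br_hom: "coeff (br_hom i f j g) (a + b)
           = (of_nat (Suc a) * of_int j - of_nat (Suc b) * of_int i) * coeff f a * coeff g b"
proof -
  let ?Df = "pCons 0 f \<circ>\<^sub>p [:of_int j, 1:] - pCons 0 f"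
  let ?Dg = "pCons 0 g \<circ>\<^sub>p [:of_int i, 1:] - pCons 0 g"
  have "degree (pCons 0 f) \<le> Suc a" "degree (pCons 0 g) \<le> Suc b"
    using assms degree_pCons_le[of 0 f] degree_pCons_le[of 0 g] by linarith+
  note shift_f = pcompose_shift_diff[OF this(1), of "of_int j"]
   and shift_g = pcompose_shift_diff[OF this(2), of "of_int i"]
  show "degree (br_hom i f j g) \<le> a + b"
    unfolding br_hom_eq_shift_diffs
    by (intro degree_diff_le order_trans[OF degree_mult_le])
       (use shift_f(1) shift_g(1) assms in auto)
  have "coeff (br_hom i f j g) (a + b)
        = coeff (?Df * g) (a + b) - coeff (?Dg * f) (a + b)"
    unfolding br_hom_eq_shift_diffs by (rule coeff_diff)
  also have "\<dots> = coeff ?Df a * coeff g b - coeff ?Dg b * coeff f a"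
    by (simp only: coeff_mult_degree_le_sum[OF shift_f(1) assms(2)]
        coeff_mult_degree_le_sum[OF shift_g(1) assms(1), unfolded add.commute[of b a]])
  also have "\<dots> = (of_nat (Suc a) * of_int j - of_nat (Suc b) * of_int i) * coeff f a * coeff g b"
    by (simp only: shift_f(2) shift_g(2)) (simp add: algebra_simps)
  finally show "coeff (br_hom i f j g) (a + b)
           = (of_nat (Suc a) * of_int j - of_nat (Suc b) * of_int i) * coeff f a * coeff g b" .
qed

lemma br_hom_nonzero_degree:
  fixes f g :: "'a::field_char_0 poly"
  assumes "f \<noteq> 0" and "g \<noteq> 0"
    and "int (Suc (degree f)) * j \<noteq> int (Suc (degree g)) * i"
  shows "br_hom i f j g \<noteq> 0" and "degree (br_hom i f j g) = degree f + degree g"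
proof -
  have "(of_int (int (Suc (degree f)) * j) :: 'a) \<noteq> of_int (int (Suc (degree g)) * i)"
    unfolding of_int_eq_iff by (rule assms(3))
  then have "(of_nat (Suc (degree f)) * of_int j - of_nat (Suc (degree g)) * of_int i :: 'a) \<noteq> 0"
    by (simp only: of_int_mult of_int_of_nat_eq) simp
  then have nonzero_coeff: "coeff (br_hom i f j g) (degree f + degree g) \<noteq> 0"
    using assms(1,2) by (simp add: coeff_br_hom)
  then show "br_hom i f j g \<noteq> 0" by auto
  show "degree (br_hom i f j g) = degree f + degree g"
    using le_degree[OF nonzero_coeff] degree_br_hom_le[of f "degree f" g "degree g" i j] by simp
qed

definition component :: "(int \<Rightarrow> 'b::zero) set \<Rightarrow> int \<Rightarrow> 'b set" where
  "component L k = {p. Whom k p \<in> L}"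

definition degrees :: "'a::zero poly set \<Rightarrow> nat set" where
  "degrees V = degree ` (V - {0})"

lemma mem_degreesI: "q \<in> V \<Longrightarrow> q \<noteq> 0 \<Longrightarrow> degree q \<in> degrees V"
  by (simp add: degrees_def)

lemma Wbracket_Whom:
  fixes f g :: "'a::field_char_0 poly"
  shows "Wbracket (Whom i f) (Whom j g) = Whom (i + j) (br_hom i f j g)"
proof (cases "f = 0")
  case True
  then show ?thesis by (simp add: Wbracket_def Whom_def br_hom_def fun_eq_iff)
next
  case False
  then have "{i'. Whom i f i' \<noteq> 0} = {i}" by (auto simp: Whom_def)
  then show ?thesis by (auto simp: Wbracket_def Whom_def br_hom_def fun_eq_iff)
qed

lemma poly_subspace_component:
  fixes G :: "(int \<Rightarrow> 'a::field_char_0 poly) set"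
  shows "poly_subspace (component (Lie_gen G) k)"
proof -
  have "Whom k 0 = (\<lambda>_. 0 :: 'a poly)"
    by (simp add: Whom_def fun_eq_iff)
  then have "Whom k 0 \<in> Lie_gen G"
    by (simp add: Lie_gen.zero)
  moreover have "Whom k (p + q) \<in> Lie_gen G"
    if "Whom k p \<in> Lie_gen G" "Whom k q \<in> Lie_gen G" for p q
  proof -
    have "Whom k (p + q) = (\<lambda>k'. Whom k p k' + Whom k q k')"
      by (simp add: Whom_def fun_eq_iff)
    then show ?thesis using Lie_gen.add[OF that] by simp
  qed
  moreover have "Whom k (smult c p) \<in> Lie_gen G" if "Whom k p \<in> Lie_gen G" for c p
  proof -
    have "Whom k (smult c p) = (\<lambda>k'. smult c (Whom k p k'))"
      by (simp add: Whom_def fun_eq_iff)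
    then show ?thesis using Lie_gen.smul[OF that] by simp
  qed
  ultimately show ?thesis
    unfolding poly_subspace_def component_def by blast
qed

lemma br_hom_mem_component:
  assumes "f \<in> component (Lie_gen G) i" and "g \<in> component (Lie_gen G) j"
  shows "br_hom i f j g \<in> component (Lie_gen G) (i + j)"
  using Lie_gen.brk[of "Whom i f" G "Whom j g"] assms
  by (simp add: component_def Wbracket_Whom)

lemma add_mem_degrees_component:
  fixes G :: "(int \<Rightarrow> 'a::field_char_0 poly) set"
  assumes "m \<in> degrees (component (Lie_gen G) i)" and "n \<in> degrees (component (Lie_gen G) j)"
    and "int (Suc m) * j \<noteq> int (Suc n) * i"
  shows "m + n \<in> degrees (component (Lie_gen G) (i + j))"
proof -
  obtain f g where f: "f \<in> component (Lie_gen G) i" "f \<noteq> 0" "degree f = m"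
    and g: "g \<in> component (Lie_gen G) j" "g \<noteq> 0" "degree g = n"
    using assms(1,2) unfolding degrees_def by blast
  have "br_hom i f j g \<noteq> 0" and "degree (br_hom i f j g) = m + n"
    using br_hom_nonzero_degree[OF f(2) g(2)] f(3) g(3) assms(3) by auto
  with mem_degreesI[OF br_hom_mem_component[OF f(1) g(1)]] show ?thesis
    by simp
qed

lemma mem_poly_subspace_if_all_degrees:
  fixes V :: "'a::field poly set"
  assumes "poly_subspace V" and "degrees V = UNIV"
  shows "p \<in> V"
proof (induction "degree p" arbitrary: p rule: less_induct)
  case less
  show ?case
  proof (cases "p = 0")
    case True
    then show ?thesis using assms(1) by (simp add: poly_subspace_def)
  next
    case False
    obtain q where q: "q \<in> V" "q \<noteq> 0" "degree q = degree p"
      using assms(2) unfolding degrees_def by (metis DiffE UNIV_I imageE singletonI)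
    define r where "r = p - smult (lead_coeff p / lead_coeff q) q"
    have "r \<in> V"
    proof (cases "r = 0")
      case True
      then show ?thesis using assms(1) by (simp add: poly_subspace_def)
    next
      case False
      have "degree r \<le> degree p"
        unfolding r_def using q(3) by (intro degree_diff_le) (auto intro: le_trans[OF degree_smult_le])
      moreover have "coeff q (degree p) \<noteq> 0"
        using q(2,3) by (metis leading_coeff_0_iff)
      then have "coeff r (degree p) = 0"
        using q(3) by (simp add: r_def)
      ultimately have "degree r < degree p"
        using False by (metis leading_coeff_0_iff order_less_le)
      then show ?thesis by (rule less)
    qed
    moreover have "p = r + smult (lead_coeff p / lead_coeff q) q"
      by (simp add: r_def)
    ultimately show ?thesis
      using q(1) assms(1) unfolding poly_subspace_def by metis
  qed
qed

lemma mem_Lie_gen_if_components: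
  assumes "x \<in> Wset" and "\<And>k. x k \<in> component (Lie_gen G) k"
  shows "x \<in> Lie_gen G"
proof -
  have "y \<in> Lie_gen G"
    if "finite F" "\<And>k. k \<notin> F \<Longrightarrow> y k = 0" "\<And>k. y k \<in> component (Lie_gen G) k" for F y
    using that
  proof (induction F arbitrary: y rule: finite_induct)
    case empty
    then have "y = (\<lambda>_. 0)" by auto
    then show ?case by (simp add: Lie_gen.zero)
  next
    case (insert j F)
    have "y(j := 0) \<in> Lie_gen G"
      using insert.prems poly_subspace_component[of G]
      by (intro insert.IH) (auto simp: poly_subspace_def)
    moreover have "Whom j (y j) \<in> Lie_gen G"
      using insert.prems(2) by (simp add: component_def)
    moreover have "y = (\<lambda>k. (y(j := 0)) k + Whom j (y j) k)"
      by (auto simp: Whom_def)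
    ultimately show ?case by (metis Lie_gen.add)
  qed
  then show ?thesis using assms unfolding Wset_def by blast
qed

lemma nat_combination_of_consecutive:
  fixes a d :: int
  assumes "0 < a" and "a * a \<le> d"
  shows "\<exists>r s :: nat. d = int r * (a + 1) + int s * a"
proof -
  define u where "u = d div a"
  define r where "r = d mod a"
  have "0 \<le> r" "r < a" "d = a * u + r"
    using assms(1) by (simp_all add: u_def r_def)
  moreover have "a \<le> u"
    using assms zdiv_mono1[of "a * a" d a] by (simp add: u_def)
  ultimately have "d = int (nat r) * (a + 1) + int (nat (u - r)) * a"
    by (simp add: algebra_simps)
  then show ?thesis by blast
qed

lemma constants_in_components:
  fixes G :: "(int \<Rightarrow> 'a::field_char_0 poly) set"
  assumes "0 < a" and "0 \<in> degrees (component (Lie_gen G) a)"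
    and "0 \<in> degrees (component (Lie_gen G) (a + 1))" and "(a + 1)\<^sup>2 \<le> k"
  shows "0 \<in> degrees (component (Lie_gen G) k)"
proof -
  let ?C = "\<lambda>k. 0 \<in> degrees (component (Lie_gen G) k)"
  have step: "?C (i + j)" if "?C i" "?C j" "i \<noteq> j" for i j
    using add_mem_degrees_component[OF that(1,2)] that(3) by simp
  have by_succ: "?C (2 * a + 1 + int r * (a + 1))" for r
  proof (induction r)
    case 0
    show ?case using step[OF assms(2,3)] by (simp add: algebra_simps)
  next
    case (Suc r)
    have "2 * a + 1 + int r * (a + 1) \<noteq> a + 1"
      using assms(1) mult_nonneg_nonneg[of "int r" "a + 1"] by linarith
    then show ?case using step[OF Suc.IH assms(3)] by (simp add: algebra_simps)
  qed
  have "?C (2 * a + 1 + int r * (a + 1) + int s * a)" for r s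
  proof (induction s)
    case (Suc s)
    have "2 * a + 1 + int r * (a + 1) + int s * a \<noteq> a"
      using assms(1) mult_nonneg_nonneg[of "int r" "a + 1"] mult_nonneg_nonneg[of "int s" a] by linarith
    then show ?case using step[OF Suc.IH assms(2)] by (simp add: algebra_simps)
  qed (simp add: by_succ)
  moreover obtain r s :: nat where "k - (2 * a + 1) = int r * (a + 1) + int s * a"
    using nat_combination_of_consecutive[OF assms(1), of "k - (2 * a + 1)"] assms(4)
    by (auto simp: power2_eq_square algebra_simps)
  then have "k = 2 * a + 1 + int r * (a + 1) + int s * a"
    by linarith
  ultimately show ?thesis by simp
qed

lemma degrees_in_components_by_raising:
  fixes G :: "(int \<Rightarrow> 'a::field_char_0 poly) set"
  assumes "0 < i" and "1 \<in> degrees (component (Lie_gen G) i)" and "i \<le> K"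
    and "\<And>k. K \<le> k \<Longrightarrow> 0 \<in> degrees (component (Lie_gen G) k)"
    and "K + int n * i \<le> k"
  shows "n \<in> degrees (component (Lie_gen G) k)"
  using assms(5)
proof (induction n arbitrary: k)
  case 0
  then show ?case using assms(4) by simp
next
  case (Suc n)
  have "n \<in> degrees (component (Lie_gen G) (k - i))"
    using Suc by (intro Suc.IH) (simp add: algebra_simps)
  moreover have "int (Suc 1) * (k - i) \<noteq> int (Suc n) * i"
    using Suc.prems assms(1,3) by (simp add: algebra_simps) (smt (verit) mult_nonneg_nonneg of_nat_0_le_iff)
  ultimately show ?case
    using add_mem_degrees_component[OF assms(2)] by fastforce
qed

lemma finite_codim_degrees:
  fixes S :: "'a::field poly set"
  assumes "finite_codim S"
  shows "\<exists>N. \<forall>n>N. n \<in> degrees S"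
proof -
  obtain B where B: "finite B" "\<forall>p. \<exists>s\<in>S. \<exists>c. p = s + (\<Sum>b\<in>B. smult (c b) b)"
    using assms unfolding finite_codim_def by blast
  define N where "N = Max (insert 0 (degree ` B))"
  have "n \<in> degrees S" if "N < n" for n
  proof -
    obtain s c where s: "s \<in> S" "monom 1 n = s + (\<Sum>b\<in>B. smult (c b) b)"
      using B(2) by blast
    define t where "t = (\<Sum>b\<in>B. smult (c b) b)"
    have "degree t \<le> N"
      unfolding t_def N_def using B(1)
      by (intro degree_sum_le) (auto intro: le_trans[OF degree_smult_le])
    then have "degree (- t) < degree (monom (1::'a) n)"
      using that by (simp add: degree_monom_eq)
    moreover have "s = monom 1 n + - t"
      using s(2) by (simp add: t_def)
    ultimately have "degree s = n"
      by (simp only: degree_add_eq_left degree_monom_eq[OF one_neq_zero])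
    moreover have "s \<noteq> 0" using calculation that by auto
    ultimately show ?thesis using mem_degreesI[OF s(1)] by simp
  qed
  then show ?thesis by blast
qed

lemma all_degrees_in_components:
  fixes G :: "(int \<Rightarrow> 'a::field_char_0 poly) set"
  assumes "0 < i"
    and "1 \<in> component (Lie_gen G) i" and "1 \<in> component (Lie_gen G) (i + 1)"
    and "[:0, 1:] \<in> component (Lie_gen G) i"
    and "\<forall>n>N. n \<in> degrees (component (Lie_gen G) 0)"
    and "(i + 1)\<^sup>2 + int (Suc N) * i \<le> k"
  shows "degrees (component (Lie_gen G) k) = UNIV"
proof -
  let ?C = "component (Lie_gen G)"
  have "i \<le> (i + 1)\<^sup>2"
    using self_le_power[of "i + 1" 2] assms(1) by simp
  have constants: "0 \<in> degrees (?C k')" if "(i + 1)\<^sup>2 \<le> k'" for k'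
    using constants_in_components[OF assms(1)] mem_degreesI[OF assms(2)] mem_degreesI[OF assms(3)] that
    by simp
  have "n \<in> degrees (?C k)" for n
  proof (cases "n \<le> N")
    case True
    then have "int n * i \<le> int (Suc N) * i"
      using assms(1) by (intro mult_right_mono) auto
    then have "(i + 1)\<^sup>2 + int n * i \<le> k"
      using assms(6) by linarith
    then show ?thesis
      using degrees_in_components_by_raising[OF assms(1) _ \<open>i \<le> (i + 1)\<^sup>2\<close> constants]
        mem_degreesI[OF assms(4)] by simp
  next
    case False
    have "0 \<le> int (Suc N) * i"
      using assms(1) by simp
    then have "k \<noteq> 0" "(i + 1)\<^sup>2 \<le> k"
      using assms(6) \<open>i \<le> (i + 1)\<^sup>2\<close> assms(1) by linarith+
    then show ?thesis
      using add_mem_degrees_component[of n G 0 0 k] assms(5) False constants by simp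
  qed
  then show ?thesis by blast
qed

theorem lemma2p1:
  fixes S :: "'a::{alg_closed_field, field_char_0} poly set" and i0 :: int
  assumes "poly_subspace S" and "finite_codim S" and "i0 > 0"
  shows "\<exists>K::int. K > 0 \<and>
    (\<forall>x\<in>Wset. (\<forall>k<K. x k = 0) \<longrightarrow>
       x \<in> Lie_gen ({Whom i0 1, Whom (i0 + 1) 1, Whom i0 [:0, 1:]} \<union> Whom 0 ` S))"
proof -
  define G where "G = {Whom i0 1, Whom (i0 + 1) 1, Whom i0 [:0, 1:]} \<union> Whom 0 ` S"
  let ?C = "component (Lie_gen G)"
  have gens: "1 \<in> ?C i0" "1 \<in> ?C (i0 + 1)" "[:0, 1:] \<in> ?C i0" "S \<subseteq> ?C 0"
    by (auto simp: G_def component_def intro: Lie_gen.gen)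
  obtain N where "\<forall>n>N. n \<in> degrees (?C 0)"
    using finite_codim_degrees[OF assms(2)] gens(4) unfolding degrees_def by blast
  define K where "K = (i0 + 1)\<^sup>2 + int (Suc N) * i0"
  have components: "x k \<in> ?C k" if "\<forall>k<K. x k = 0" for x k
  proof (cases "k < K")
    case True
    then show ?thesis using that poly_subspace_component[of G k] by (simp add: poly_subspace_def)
  next
    case False
    then have "degrees (?C k) = UNIV"
      using all_degrees_in_components[OF assms(3) gens(1-3) \<open>\<forall>n>N. _\<close>] by (simp add: K_def)
    then show ?thesis
      using mem_poly_subspace_if_all_degrees[OF poly_subspace_component] by blast
  qed
  show ?thesis
    unfolding G_def[symmetric]
  proof (intro exI[of _ K] conjI ballI impI)
    show "0 < K"
      using assms(3) by (simp add: K_def add_pos_nonneg)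
    fix x :: "int \<Rightarrow> 'a poly"
    assume "x \<in> Wset" and "\<forall>k<K. x k = 0"
    then show "x \<in> Lie_gen G"
      by (intro mem_Lie_gen_if_components components)
  qed
qed

end
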